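(* Let $(\mathcal{H},\langle\cdot,\cdot\rangle)$ be a real Hilbert space with induced norm $\|\cdot\|$. Let $f:\mathcal{H}\to\mathbb{R}$ be $\mu$-strongly convex and $L$-smooth with $0<\mu<L<+\infty$, and let $g:\mathcal{H}\to\mathbb{R}\cup\{+\infty\}$ be convex, proper and lower semicontinuous. Let $q=\mu/L$ and let $((x^k,y^k,z^k))_{k\in\mathbb{N}_0}$ be generated by the Prox-TMM method (described in the context) from an arbitrary $x^0\in\mathcal{H}$, and let $x^\star$ be the unique minimizer of $f+g$. Then $\|z^k-x^\star\|\in\mathcal{O}\big((1-\sqrt q)^k\big)$ as $k\to\infty$.
   Context: $f$ is $L$-smooth if Fréchet differentiable with $L$-Lipschitz gradient; $\mu$-strongly convex means $f-\frac{\mu}{2}\|\cdot\|^2$ is convex. For $\gamma>0$, $\operatorname{Prox}^{\gamma}_g(x)=\operatorname{argmin}_z\big(g(z)+\frac{1}{2\gamma}\|x-z\|^2\big)$. The Prox-TMM method: $q=\mu/L$, $z^0=x^0$, and for $k=0,1,2,\dots$: $y^k=\frac{2\sqrt q}{1+\sqrt q}z^k+\frac{1-\sqrt q}{1+\sqrt q}x^k$, $\bar z^{k+1}=(1-\sqrt q)z^k+\sqrt q\,y^k-\frac{1}{\sqrt q L}\nabla f(y^k)$, $z^{k+1}=\operatorname{Prox}^{1/(\sqrt q L)}_g(\bar z^{k+1})$, $x^{k+1}=y^k-\frac1L\nabla f(y^k)-\sqrt q(\bar z^{k+1}-z^{k+1})$. *)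

theory Defs
  imports "HOL-Analysis.Analysis" "HOL-Library.Landau_Symbols"
begin

definition ext_convex :: "('a::real_vector \<Rightarrow> ereal) \<Rightarrow> bool" where
  "ext_convex g \<longleftrightarrow> (\<forall>x y t. 0 \<le> t \<and> t \<le> 1 \<longrightarrow>
      g ((1 - t) *\<^sub>R x + t *\<^sub>R y) \<le> ereal (1 - t) * g x + ereal t * g y)"

definition ext_proper :: "('a \<Rightarrow> ereal) \<Rightarrow> bool" where
  "ext_proper g \<longleftrightarrow> (\<forall>x. g x \<noteq> -\<infinity>) \<and> (\<exists>x. g x \<noteq> \<infinity>)"

text \<open>Lower semicontinuity (sequential, equivalent to the topological one in metric spaces).\<close>
definition ext_lsc :: "('a::metric_space \<Rightarrow> ereal) \<Rightarrow> bool" where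
  "ext_lsc g \<longleftrightarrow> (\<forall>x X. X \<longlonglongrightarrow> x \<longrightarrow> g x \<le> liminf (\<lambda>n. g (X n)))"

definition prox :: "real \<Rightarrow> ('a::real_normed_vector \<Rightarrow> ereal) \<Rightarrow> 'a \<Rightarrow> 'a" where
  "prox \<gamma> g x = (SOME z. \<forall>w. g z + ereal (1 / (2 * \<gamma>) * (norm (x - z))\<^sup>2)
                                \<le> g w + ereal (1 / (2 * \<gamma>) * (norm (x - w))\<^sup>2))"

end

(* The proximal step makes u_k = sqrt(q) L (zbar_k - z_k) a subgradient of g
   at z_k, and optimality makes -grad f(xstar) a subgradient of g at xstar. With the shifted
   variables Z = z_(j+1) - xstar, U = u_(j+1) + grad f(xstar), Y = y_j - xstar and
   D = grad f(y_j) - grad f(xstar), the Lyapunov function is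

     V_j = E(Z, U) + B(y_j, xstar) - Q(Y, D),

   where E is a positive definite quadratic form, B the Bregman distance of f, and
   Q(Y, D) = mu/2 |Y|^2 + |D - mu Y|^2 / (2 (L - mu)) the lower bound in the interpolation
   inequality B(a, b) >= Q(a - b, grad f(a) - grad f(b)) for mu-strongly convex L-smooth f.
   Adding to V_(j+1) - (1 - sqrt q)^2 V_j the interpolation inequalities for the pairs
   (xstar, y_(j+1)) and (y_j, y_(j+1)), with weights 1 - (1 - sqrt q)^2 and (1 - sqrt q)^2, and the
   subgradient inequalities of g at z_(j+1), z_(j+2) and xstar leaves a negative semidefinite
   quadratic form in six vectors, so V_(j+1) <= (1 - sqrt q)^2 V_j. Since V_j >= kappa |Z|^2 with
   kappa > 0, the rate holds from any starting point.
   Because prox is defined by Hilbert choice, the existence of proximal points is proved as well: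
   a minimising sequence of the strongly convex proximal objective is Cauchy. *)

theory Submission
  imports Defs
begin

lemma le_of_vanishing_perturbation:
  fixes A B C :: real
  assumes "\<And>t. 0 < t \<Longrightarrow> t \<le> 1 \<Longrightarrow> B - t * C \<le> A"
  shows "B \<le> A"
proof (rule tendsto_upperbound)
  show "((\<lambda>t. B - t * C) \<longlongrightarrow> B) (at_right 0)"
    by (auto intro!: tendsto_eq_intros)
  show "\<forall>\<^sub>F t in at_right 0. B - t * C \<le> A"
    unfolding eventually_at_right_field using assms by (auto intro!: exI[of _ 1])
qed simp

section \<open>Smooth strongly convex functions\<close>

definition interp_gap :: "real \<Rightarrow> real \<Rightarrow> 'a::real_inner \<Rightarrow> 'a \<Rightarrow> real" where
  "interp_gap \<mu> L Y D = \<mu> / 2 * (norm Y)\<^sup>2 + (norm (D - \<mu> *\<^sub>R Y))\<^sup>2 / (2 * (L - \<mu>))"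

locale lipschitz_gradient =
  fixes f :: "'a::real_inner \<Rightarrow> real" and gradf :: "'a \<Rightarrow> 'a" and L :: real
  assumes has_gradient: "\<And>u. (f has_derivative (\<lambda>h. gradf u \<bullet> h)) (at u)"
    and gradient_lipschitz: "\<And>u v. norm (gradf u - gradf v) \<le> L * norm (u - v)"
begin

lemma has_real_derivative_along_line:
  "((\<lambda>t. f (b + t *\<^sub>R w)) has_real_derivative (gradf (b + t *\<^sub>R w) \<bullet> w)) (at t)"
proof -
  have "((\<lambda>t. b + t *\<^sub>R w) has_derivative (\<lambda>h. h *\<^sub>R w)) (at t)"
    by (auto intro!: derivative_eq_intros)
  from has_derivative_compose[OF this has_gradient]
  show ?thesis
    by (simp add: has_field_derivative_def mult.commute[of _ "gradf _ \<bullet> w"])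
qed

lemma first_order_error_bound:
  "\<bar>f a - f b - gradf b \<bullet> (a - b)\<bar> \<le> L / 2 * (norm (a - b))\<^sup>2"
proof -
  define w where "w = a - b"
  define N where "N = (norm w)\<^sup>2"
  have slope: "\<bar>gradf (b + t *\<^sub>R w) \<bullet> w - gradf b \<bullet> w\<bar> \<le> L * t * N" if "0 \<le> t" for t
  proof -
    have "\<bar>gradf (b + t *\<^sub>R w) \<bullet> w - gradf b \<bullet> w\<bar> \<le> norm (gradf (b + t *\<^sub>R w) - gradf b) * norm w"
      by (metis Cauchy_Schwarz_ineq2 inner_diff_left)
    also have "\<dots> \<le> (L * norm (t *\<^sub>R w)) * norm w"
      using gradient_lipschitz[of "b + t *\<^sub>R w" b] by (intro mult_right_mono) auto
    also have "\<dots> = L * t * N"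
      using that by (simp add: N_def power2_eq_square)
    finally show ?thesis .
  qed
  define p where "p = (\<lambda>c t. f (b + t *\<^sub>R w) - t * (gradf b \<bullet> w) + c * (L / 2 * t\<^sup>2 * N))"
  have dp: "(p c has_real_derivative (gradf (b + t *\<^sub>R w) \<bullet> w - gradf b \<bullet> w + c * (L * t * N))) (at t)"
    for c t
    unfolding p_def by (auto intro!: derivative_eq_intros has_real_derivative_along_line)
  have "p (-1) 1 \<le> p (-1) 0"
  proof (rule DERIV_nonpos_imp_nonincreasing[of 0 1])
    fix t :: real
    assume "0 \<le> t"
    with dp[of "-1" t] slope[of t]
    show "\<exists>y. (p (-1) has_real_derivative y) (at t) \<and> y \<le> 0"
      by (fastforce simp: abs_le_iff)
  qed simp
  moreover have "p 1 0 \<le> p 1 1"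
  proof (rule DERIV_nonneg_imp_nondecreasing[of 0 1])
    fix t :: real
    assume "0 \<le> t"
    with dp[of 1 t] slope[of t]
    show "\<exists>y. (p 1 has_real_derivative y) (at t) \<and> 0 \<le> y"
      by (fastforce simp: abs_le_iff)
  qed simp
  ultimately show ?thesis
    unfolding p_def w_def N_def abs_le_iff by (simp add: algebra_simps)
qed

lemma descent_upper: "f a \<le> f b + gradf b \<bullet> (a - b) + L / 2 * (norm (a - b))\<^sup>2"
  using first_order_error_bound[of a b] by linarith

lemma descent_lower: "f b + gradf b \<bullet> (a - b) - L / 2 * (norm (a - b))\<^sup>2 \<le> f a"
  using first_order_error_bound[of a b] by linarith

definition bregman :: "'a \<Rightarrow> 'a \<Rightarrow> real" where
  "bregman a b = f a - f b - gradf b \<bullet> (a - b)"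

lemma bregman_three_point: "bregman a c - bregman b c = bregman a b + (gradf b - gradf c) \<bullet> (a - b)"
  unfolding bregman_def by (simp add: inner_diff_left inner_diff_right)

end

locale strongly_convex_lipschitz_gradient = lipschitz_gradient +
  fixes \<mu> :: real
  assumes strongly_convex: "convex_on UNIV (\<lambda>u. f u - \<mu> / 2 * (norm u)\<^sup>2)"
    and mu_less_L: "\<mu> < L"
begin

lemma strong_convexity_lower_bound:
  "f b + gradf b \<bullet> (a - b) + \<mu> / 2 * (norm (a - b))\<^sup>2 \<le> f a"
proof -
  define w where "w = a - b"
  define h where "h = (\<lambda>u. f u - \<mu> / 2 * (norm u)\<^sup>2)"
  have norm_line: "(norm (b + t *\<^sub>R w))\<^sup>2 = (norm b)\<^sup>2 + 2 * t * (b \<bullet> w) + t\<^sup>2 * (norm w)\<^sup>2" for t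
    unfolding power2_norm_eq_inner
    by (simp add: inner_add_left inner_add_right inner_commute algebra_simps power2_eq_square)
  have "(gradf b - \<mu> *\<^sub>R b) \<bullet> w - t * ((L + \<mu>) / 2 * (norm w)\<^sup>2) \<le> h a - h b"
    if t: "0 < t" "t \<le> 1" for t
  proof -
    have "(1 - t) *\<^sub>R b + t *\<^sub>R a = b + t *\<^sub>R w"
      unfolding w_def by (simp add: algebra_simps)
    with convex_onD[OF strongly_convex, of t b a] t
    have "h (b + t *\<^sub>R w) \<le> (1 - t) * h b + t * h a"
      unfolding h_def by simp
    then have "h (b + t *\<^sub>R w) - h b \<le> t * (h a - h b)"
      by (simp add: algebra_simps)
    moreover have "h (b + t *\<^sub>R w) - h b
        = f (b + t *\<^sub>R w) - f b - \<mu> / 2 * (2 * t * (b \<bullet> w) + t\<^sup>2 * (norm w)\<^sup>2)"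
      unfolding h_def norm_line by (simp add: algebra_simps)
    moreover have "t * (gradf b \<bullet> w) - L / 2 * (t\<^sup>2 * (norm w)\<^sup>2) \<le> f (b + t *\<^sub>R w) - f b"
      using descent_lower[of b "b + t *\<^sub>R w"] t by (simp add: power_mult_distrib)
    moreover have "t * ((gradf b - \<mu> *\<^sub>R b) \<bullet> w - t * ((L + \<mu>) / 2 * (norm w)\<^sup>2))
        = t * (gradf b \<bullet> w) - L / 2 * (t\<^sup>2 * (norm w)\<^sup>2) - \<mu> / 2 * (2 * t * (b \<bullet> w) + t\<^sup>2 * (norm w)\<^sup>2)"
      by (simp add: inner_diff_left algebra_simps power2_eq_square)
    ultimately have "t * ((gradf b - \<mu> *\<^sub>R b) \<bullet> w - t * ((L + \<mu>) / 2 * (norm w)\<^sup>2)) \<le> t * (h a - h b)"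
      by linarith
    with t show ?thesis by simp
  qed
  then have "(gradf b - \<mu> *\<^sub>R b) \<bullet> w \<le> h a - h b"
    by (rule le_of_vanishing_perturbation)
  moreover have "(norm a)\<^sup>2 = (norm b)\<^sup>2 + 2 * (b \<bullet> w) + (norm w)\<^sup>2"
    using norm_line[of 1] by (simp add: w_def)
  ultimately show ?thesis
    unfolding h_def w_def by (simp add: inner_diff_left algebra_simps)
qed

text \<open>The point \<open>a - (\<nabla>f a - \<nabla>f b - \<mu>(a - b)) / (L - \<mu>)\<close> is squeezed between the strong
  convexity bound around \<open>b\<close> and the descent bound around \<open>a\<close>.\<close>
lemma interpolation_inequality: "interp_gap \<mu> L (a - b) (gradf a - gradf b) \<le> bregman a b"
proof -
  define l where "l = L - \<mu>"
  define D where "D = gradf a - gradf b - \<mu> *\<^sub>R (a - b)"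
  define e where "e = - ((1 / l) *\<^sub>R D)"
  have l: "0 < l"
    using mu_less_L unfolding l_def by simp
  have "f b + gradf b \<bullet> ((a - b) + e) + \<mu> / 2 * (norm ((a - b) + e))\<^sup>2 \<le> f (a + e)"
    using strong_convexity_lower_bound[of b "a + e"] by (simp add: algebra_simps)
  moreover have "f (a + e) \<le> f a + gradf a \<bullet> e + L / 2 * (norm e)\<^sup>2"
    using descent_upper[of "a + e" a] by simp
  moreover have "gradf b \<bullet> ((a - b) + e) + \<mu> / 2 * (norm ((a - b) + e))\<^sup>2 - gradf a \<bullet> e - L / 2 * (norm e)\<^sup>2
      = gradf b \<bullet> (a - b) + \<mu> / 2 * (norm (a - b))\<^sup>2 - D \<bullet> e - l / 2 * (norm e)\<^sup>2"
  proof -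
    have n: "(norm ((a - b) + e))\<^sup>2 = (norm (a - b))\<^sup>2 + 2 * ((a - b) \<bullet> e) + (norm e)\<^sup>2"
      unfolding power2_norm_eq_inner by (simp add: inner_add_left inner_add_right inner_commute)
    have g: "gradf a = gradf b + D + \<mu> *\<^sub>R (a - b)"
      unfolding D_def by simp
    show ?thesis
      unfolding n g l_def
      by (simp add: inner_add_left inner_add_right inner_diff_left inner_diff_right field_simps)
  qed
  moreover have "- (D \<bullet> e) - l / 2 * (norm e)\<^sup>2 = (norm D)\<^sup>2 / (2 * l)"
  proof -
    have "D \<bullet> e = - ((norm D)\<^sup>2 / l)" "(norm e)\<^sup>2 = (norm D)\<^sup>2 / l\<^sup>2"
      unfolding e_def using l by (simp_all add: power2_norm_eq_inner power_divide)
    with l show ?thesis by (simp add: field_simps power2_eq_square)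
  qed
  ultimately show ?thesis
    unfolding bregman_def interp_gap_def D_def[symmetric] l_def[symmetric] by linarith
qed

lemma bregman_le: "bregman a b \<le> (gradf a - gradf b) \<bullet> (a - b) - interp_gap \<mu> L (a - b) (gradf a - gradf b)"
proof -
  have "interp_gap \<mu> L (b - a) (gradf b - gradf a) = interp_gap \<mu> L (a - b) (gradf a - gradf b)"
  proof -
    have "(gradf b - gradf a) - \<mu> *\<^sub>R (b - a) = - ((gradf a - gradf b) - \<mu> *\<^sub>R (a - b))"
      by (simp add: algebra_simps)
    then show ?thesis
      unfolding interp_gap_def by (metis norm_minus_cancel norm_minus_commute)
  qed
  with interpolation_inequality[of b a] show ?thesis
    unfolding bregman_def by (simp add: inner_diff_left inner_diff_right)
qed

end

section \<open>Subgradients and the proximal operator\<close>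

definition ext_subgradient :: "('a::real_inner \<Rightarrow> ereal) \<Rightarrow> 'a \<Rightarrow> 'a \<Rightarrow> bool" where
  "ext_subgradient g z p \<longleftrightarrow> (\<forall>w. g z + ereal (p \<bullet> (w - z)) \<le> g w)"

lemma ext_subgradient_real:
  assumes "ext_subgradient g z p" "g z = ereal a" "g w = ereal b"
  shows "a + p \<bullet> (w - z) \<le> b"
  using assms unfolding ext_subgradient_def by (metis ereal_less_eq(3) plus_ereal.simps(1))

lemma ext_convex_real_comb:
  fixes g :: "'a::real_vector \<Rightarrow> ereal"
  assumes "ext_convex g" "g u = ereal a" "g v = ereal b" "0 \<le> t" "t \<le> 1"
  shows "g ((1 - t) *\<^sub>R u + t *\<^sub>R v) \<le> ereal ((1 - t) * a + t * b)"
proof -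
  have "g ((1 - t) *\<^sub>R u + t *\<^sub>R v) \<le> ereal (1 - t) * g u + ereal t * g v"
    using assms(1,4,5) unfolding ext_convex_def by blast
  with assms(2,3) show ?thesis by simp
qed

lemma ext_subgradientI_first_order:
  fixes g :: "'a::real_inner \<Rightarrow> ereal"
  assumes convex: "ext_convex g" and not_minf: "\<And>x. g x \<noteq> -\<infinity>" and gz: "g z = ereal a"
    and local: "\<And>w t b. 0 < t \<Longrightarrow> t \<le> 1 \<Longrightarrow> g (z + t *\<^sub>R (w - z)) = ereal b \<Longrightarrow>
                  a \<le> b - t * (p \<bullet> (w - z)) + t\<^sup>2 * K w"
  shows "ext_subgradient g z p"
  unfolding ext_subgradient_def
proof
  fix w
  show "g z + ereal (p \<bullet> (w - z)) \<le> g w"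
  proof (cases "g w")
    case (real c)
    have "a + p \<bullet> (w - z) - t * K w \<le> c" if t: "0 < t" "t \<le> 1" for t
    proof -
      have "(1 - t) *\<^sub>R z + t *\<^sub>R w = z + t *\<^sub>R (w - z)"
        by (simp add: algebra_simps)
      with ext_convex_real_comb[OF convex gz real, of t] t
      have le: "g (z + t *\<^sub>R (w - z)) \<le> ereal ((1 - t) * a + t * c)"
        by simp
      with not_minf obtain b where b: "g (z + t *\<^sub>R (w - z)) = ereal b"
        by (cases "g (z + t *\<^sub>R (w - z))") auto
      with le local[OF t b] have "t * (a + p \<bullet> (w - z) - t * K w) \<le> t * c"
        by (simp add: algebra_simps power2_eq_square)
      with t show ?thesis by simp
    qed
    then have "a + p \<bullet> (w - z) \<le> c"
      by (rule le_of_vanishing_perturbation)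
    with gz real show ?thesis by simp
  qed (use not_minf in auto)
qed

lemma (in lipschitz_gradient) minimizer_subgradient:
  fixes g :: "'a \<Rightarrow> ereal"
  assumes "ext_convex g" "\<And>x. g x \<noteq> -\<infinity>"
    and minimizer: "\<And>w. ereal (f m) + g m \<le> ereal (f w) + g w" and gm: "g m = ereal a"
  shows "ext_subgradient g m (- gradf m)"
proof (rule ext_subgradientI_first_order[OF assms(1,2) gm, where K = "\<lambda>w. L / 2 * (norm (w - m))\<^sup>2"])
  fix w t b
  assume t: "0 < t" "t \<le> 1" and gb: "g (m + t *\<^sub>R (w - m)) = ereal b"
  have "f m + a \<le> f (m + t *\<^sub>R (w - m)) + b"
    using minimizer[of "m + t *\<^sub>R (w - m)"] gm gb by simp
  moreover have "(norm (t *\<^sub>R (w - m)))\<^sup>2 = t\<^sup>2 * (norm (w - m))\<^sup>2"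
    using t by (simp add: power_mult_distrib)
  then have "f (m + t *\<^sub>R (w - m)) \<le> f m + t * (gradf m \<bullet> (w - m)) + L / 2 * (t\<^sup>2 * (norm (w - m))\<^sup>2)"
    using descent_upper[of "m + t *\<^sub>R (w - m)" m] by simp
  ultimately show "a \<le> b - t * (- gradf m \<bullet> (w - m)) + t\<^sup>2 * (L / 2 * (norm (w - m))\<^sup>2)"
    by (simp add: algebra_simps)
qed

definition prox_objective :: "real \<Rightarrow> ('a::real_normed_vector \<Rightarrow> ereal) \<Rightarrow> 'a \<Rightarrow> 'a \<Rightarrow> ereal" where
  "prox_objective \<gamma> g c v = g v + ereal (1 / (2 * \<gamma>) * (norm (c - v))\<^sup>2)"

lemma prox_eq_SOME: "prox \<gamma> g c = (SOME z. \<forall>w. prox_objective \<gamma> g c z \<le> prox_objective \<gamma> g c w)"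
  by (simp add: prox_def prox_objective_def)

lemma norm_minus_midpoint_sq:
  fixes c u v :: "'a::real_inner"
  shows "(norm (c - (1/2) *\<^sub>R (u + v)))\<^sup>2 = ((norm (c - u))\<^sup>2 + (norm (c - v))\<^sup>2) / 2 - (norm (u - v))\<^sup>2 / 4"
  unfolding power2_norm_eq_inner
  by (simp add: inner_add_left inner_add_right inner_diff_left inner_diff_right inner_commute field_simps)

lemma prox_objective_midpoint_le:
  fixes g :: "'a::real_inner \<Rightarrow> ereal"
  assumes "ext_convex g" "0 < \<gamma>"
    and u: "prox_objective \<gamma> g c u = ereal \<phi>u" and v: "prox_objective \<gamma> g c v = ereal \<phi>v"
  shows "prox_objective \<gamma> g c ((1/2) *\<^sub>R (u + v)) \<le> ereal ((\<phi>u + \<phi>v) / 2 - (norm (u - v))\<^sup>2 / (8 * \<gamma>))"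
proof -
  define q where "q w = 1 / (2 * \<gamma>) * (norm (c - w))\<^sup>2" for w
  have "g u = ereal (\<phi>u - q u)" "g v = ereal (\<phi>v - q v)"
    using u v unfolding prox_objective_def q_def by (cases "g u"; cases "g v"; auto)+
  from ext_convex_real_comb[OF assms(1) this, of "1/2"]
  have g_mid: "g ((1/2) *\<^sub>R (u + v)) \<le> ereal ((\<phi>u - q u) / 2 + (\<phi>v - q v) / 2)"
    by (simp add: scaleR_add_right)
  have q_mid: "q ((1/2) *\<^sub>R (u + v)) = (q u + q v) / 2 - (norm (u - v))\<^sup>2 / (8 * \<gamma>)"
    unfolding q_def norm_minus_midpoint_sq using assms(2) by (simp add: field_simps)
  have "prox_objective \<gamma> g c ((1/2) *\<^sub>R (u + v)) = g ((1/2) *\<^sub>R (u + v)) + ereal (q ((1/2) *\<^sub>R (u + v)))"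
    by (simp add: prox_objective_def q_def)
  also have "\<dots> \<le> ereal ((\<phi>u - q u) / 2 + (\<phi>v - q v) / 2) + ereal (q ((1/2) *\<^sub>R (u + v)))"
    using g_mid by (rule add_right_mono)
  also have "\<dots> = ereal ((\<phi>u + \<phi>v) / 2 - (norm (u - v))\<^sup>2 / (8 * \<gamma>))"
    unfolding q_mid by (simp add: field_simps)
  finally show ?thesis .
qed

lemma Cauchy_if_sq_dist_le:
  fixes V :: "nat \<Rightarrow> 'a::real_normed_vector"
  assumes dist: "\<And>n k. (norm (V n - V k))\<^sup>2 \<le> e n + e k" and e: "e \<longlonglongrightarrow> 0"
  shows "Cauchy V"
proof (rule CauchyI)
  fix r :: real
  assume r: "0 < r"
  then obtain N where N: "\<And>n. N \<le> n \<Longrightarrow> \<bar>e n\<bar> < r\<^sup>2 / 2"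
    using LIMSEQ_D[OF e, of "r\<^sup>2 / 2"] by auto
  have "norm (V n - V k) < r" if "N \<le> n" "N \<le> k" for n k
  proof -
    have "(norm (V n - V k))\<^sup>2 < r\<^sup>2"
      using dist[of n k] N[OF that(1)] N[OF that(2)] by linarith
    with r show ?thesis
      by (simp add: power_less_imp_less_base)
  qed
  then show "\<exists>N. \<forall>n\<ge>N. \<forall>k\<ge>N. norm (V n - V k) < r"
    by blast
qed

lemma ext_lsc_le_lim:
  assumes "ext_lsc g" "V \<longlonglongrightarrow> v" "(\<lambda>n. g (V n)) \<longlonglongrightarrow> l"
  shows "g v \<le> l"
  using assms lim_imp_Liminf[OF sequentially_bot] unfolding ext_lsc_def by metis

lemma prox_objective_le_lim:
  assumes "ext_lsc g" "V \<longlonglongrightarrow> v"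
    and \<Phi>: "\<And>n. prox_objective \<gamma> g c (V n) = ereal (\<Phi> n)" and "\<Phi> \<longlonglongrightarrow> r"
  shows "prox_objective \<gamma> g c v \<le> ereal r"
proof -
  define q where "q w = 1 / (2 * \<gamma>) * (norm (c - w))\<^sup>2" for w
  have "(\<lambda>n. q (V n)) \<longlonglongrightarrow> q v"
    unfolding q_def by (intro tendsto_intros assms(2))
  with assms(4) have "(\<lambda>n. ereal (\<Phi> n - q (V n))) \<longlonglongrightarrow> ereal (r - q v)"
    by (intro tendsto_ereal tendsto_diff)
  moreover have "g (V n) = ereal (\<Phi> n - q (V n))" for n
    using \<Phi>[of n] unfolding prox_objective_def q_def by (cases "g (V n)") auto
  ultimately have "g v \<le> ereal (r - q v)"
    using ext_lsc_le_lim[OF assms(1,2)] by simp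
  then have "prox_objective \<gamma> g c v \<le> ereal (r - q v) + ereal (q v)"
    unfolding prox_objective_def q_def by (rule add_right_mono)
  then show ?thesis
    by simp
qed

lemma prox_minimizing_sequence_Cauchy:
  fixes g :: "'a::real_inner \<Rightarrow> ereal"
  assumes "ext_convex g" "0 < \<gamma>" and inf: "\<And>w. ereal m \<le> prox_objective \<gamma> g c w"
    and \<Phi>: "\<And>n. prox_objective \<gamma> g c (V n) = ereal (\<Phi> n)" and \<Phi>_less: "\<And>n. \<Phi> n < m + 1 / real (Suc n)"
  shows "Cauchy V"
proof (rule Cauchy_if_sq_dist_le)
  fix n k
  have "ereal m \<le> ereal ((\<Phi> n + \<Phi> k) / 2 - (norm (V n - V k))\<^sup>2 / (8 * \<gamma>))"
    using inf prox_objective_midpoint_le[OF assms(1,2) \<Phi> \<Phi>] by (rule order_trans)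
  then have "(norm (V n - V k))\<^sup>2 \<le> 4 * \<gamma> * (\<Phi> n - m) + 4 * \<gamma> * (\<Phi> k - m)"
    using assms(2) by (simp add: field_simps)
  moreover have gap: "4 * \<gamma> * (\<Phi> i - m) \<le> 4 * \<gamma> / real (Suc i)" for i
    using mult_left_mono[OF less_imp_le[OF \<Phi>_less[of i]], of "4 * \<gamma>"] assms(2)
    by (simp add: algebra_simps)
  ultimately show "(norm (V n - V k))\<^sup>2 \<le> 4 * \<gamma> / real (Suc n) + 4 * \<gamma> / real (Suc k)"
    using gap[of n] gap[of k] by linarith
next
  show "(\<lambda>n. 4 * \<gamma> / real (Suc n)) \<longlonglongrightarrow> 0"
    using LIMSEQ_Suc[OF lim_const_over_n[of "4 * \<gamma>"]] by simp
qed

context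
  fixes g :: "'a::{real_inner, complete_space} \<Rightarrow> ereal" and \<gamma> :: real and x\<^sub>0 p :: 'a and a :: real
  assumes convex: "ext_convex g" and lsc: "ext_lsc g" and not_minf: "\<And>x. g x \<noteq> -\<infinity>"
    and x\<^sub>0_finite: "g x\<^sub>0 = ereal a" and x\<^sub>0_subgradient: "ext_subgradient g x\<^sub>0 p"
    and gamma_pos: "0 < \<gamma>"
begin

lemma prox_objective_lower_bound:
  "ereal (a + p \<bullet> (c - x\<^sub>0) - \<gamma> / 2 * (norm p)\<^sup>2) \<le> prox_objective \<gamma> g c v"
proof -
  have "0 \<le> (norm ((v - c) + \<gamma> *\<^sub>R p))\<^sup>2 / (2 * \<gamma>)"
    using gamma_pos by simp
  also have "\<dots> = p \<bullet> (v - c) + 1 / (2 * \<gamma>) * (norm (c - v))\<^sup>2 + \<gamma> / 2 * (norm p)\<^sup>2"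
    unfolding power2_norm_eq_inner using gamma_pos
    by (simp add: inner_add_left inner_add_right inner_diff_left inner_diff_right inner_commute field_simps)
  finally have "a + p \<bullet> (c - x\<^sub>0) - \<gamma> / 2 * (norm p)\<^sup>2 \<le> a + p \<bullet> (v - x\<^sub>0) + 1 / (2 * \<gamma>) * (norm (c - v))\<^sup>2"
    by (simp add: inner_diff_right)
  also have "ereal \<dots> \<le> g v + ereal (1 / (2 * \<gamma>) * (norm (c - v))\<^sup>2)"
    using x\<^sub>0_subgradient x\<^sub>0_finite unfolding ext_subgradient_def
    by (metis add_right_mono plus_ereal.simps(1))
  finally show ?thesis
    unfolding prox_objective_def by simp
qed

lemma prox_minimizer_exists: "\<exists>z. \<forall>w. prox_objective \<gamma> g c z \<le> prox_objective \<gamma> g c w"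
proof -
  define \<phi> where "\<phi> = prox_objective \<gamma> g c"
  define m where "m = Inf (range \<phi>)"
  have m_le: "m \<le> \<phi> w" for w
    unfolding m_def by (rule Inf_lower) simp
  have "ereal (a + p \<bullet> (c - x\<^sub>0) - \<gamma> / 2 * (norm p)\<^sup>2) \<le> m"
    using prox_objective_lower_bound unfolding m_def \<phi>_def by (blast intro: Inf_greatest)
  moreover have "m \<noteq> \<infinity>"
    using m_le[of x\<^sub>0] x\<^sub>0_finite unfolding \<phi>_def prox_objective_def by auto
  ultimately obtain mr where mr: "m = ereal mr"
    by (cases m) auto
  have "\<exists>v. \<phi> v < ereal (mr + 1 / real (Suc n))" for n
  proof -
    have "m < ereal (mr + 1 / real (Suc n))"
      using mr by simp
    then show ?thesis
      unfolding m_def by (auto simp: Inf_less_iff)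
  qed
  then obtain V where V: "\<And>n. \<phi> (V n) < ereal (mr + 1 / real (Suc n))"
    by metis
  define \<Phi> where "\<Phi> n = real_of_ereal (\<phi> (V n))" for n
  have \<Phi>: "\<phi> (V n) = ereal (\<Phi> n)" for n
    using m_le[of "V n"] V[of n] unfolding mr \<Phi>_def by (cases "\<phi> (V n)") auto
  have \<Phi>_bounds: "mr \<le> \<Phi> n" "\<Phi> n < mr + 1 / real (Suc n)" for n
    using m_le[of "V n"] V[of n] unfolding mr \<Phi> by simp_all
  have "Cauchy V"
    using m_le \<Phi> \<Phi>_bounds(2) unfolding mr \<phi>_def by (rule prox_minimizing_sequence_Cauchy[OF convex gamma_pos])
  then obtain v where v: "V \<longlonglongrightarrow> v"
    using Cauchy_convergent convergent_def by blast
  have "\<Phi> \<longlonglongrightarrow> mr"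
  proof (rule tendsto_sandwich[of "\<lambda>_. mr" _ _ "\<lambda>n. mr + 1 / real (Suc n)"])
    show "\<forall>\<^sub>F n in sequentially. mr \<le> \<Phi> n" "\<forall>\<^sub>F n in sequentially. \<Phi> n \<le> mr + 1 / real (Suc n)"
      using \<Phi>_bounds by (simp_all add: less_imp_le)
    show "(\<lambda>n. mr + 1 / real (Suc n)) \<longlonglongrightarrow> mr"
      using tendsto_add[OF tendsto_const LIMSEQ_Suc[OF lim_const_over_n[of 1]], of mr] by simp
  qed simp
  with lsc v \<Phi> have "\<phi> v \<le> m"
    unfolding \<phi>_def mr by (rule prox_objective_le_lim)
  with m_le show ?thesis
    unfolding \<phi>_def by (blast intro: order_trans)
qed

lemma prox_minimizes: "prox_objective \<gamma> g c (prox \<gamma> g c) \<le> prox_objective \<gamma> g c w"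
  using someI_ex[OF prox_minimizer_exists] unfolding prox_eq_SOME by blast

lemma prox_finite: "g (prox \<gamma> g c) \<noteq> \<infinity>"
  using prox_minimizes[of c x\<^sub>0] x\<^sub>0_finite unfolding prox_objective_def by auto

lemma prox_subgradient: "ext_subgradient g (prox \<gamma> g c) ((1 / \<gamma>) *\<^sub>R (c - prox \<gamma> g c))"
proof -
  define z where "z = prox \<gamma> g c"
  obtain a\<^sub>z where a\<^sub>z: "g z = ereal a\<^sub>z"
    using prox_finite[of c] not_minf[of z] unfolding z_def[symmetric] by (cases "g z") auto
  have "ext_subgradient g z ((1 / \<gamma>) *\<^sub>R (c - z))"
  proof (rule ext_subgradientI_first_order[OF convex not_minf a\<^sub>z, where K = "\<lambda>w. 1 / (2 * \<gamma>) * (norm (w - z))\<^sup>2"])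
    fix w t b
    assume b: "g (z + t *\<^sub>R (w - z)) = ereal b"
    have n: "(norm (c - (z + t *\<^sub>R (w - z))))\<^sup>2
        = (norm (c - z))\<^sup>2 - 2 * t * ((c - z) \<bullet> (w - z)) + t\<^sup>2 * (norm (w - z))\<^sup>2"
      unfolding power2_norm_eq_inner
      by (simp add: inner_diff_left inner_diff_right inner_add_left inner_add_right inner_commute
          algebra_simps power2_eq_square)
    have "prox_objective \<gamma> g c z \<le> prox_objective \<gamma> g c (z + t *\<^sub>R (w - z))"
      unfolding z_def by (rule prox_minimizes)
    then have "a\<^sub>z + 1 / (2 * \<gamma>) * (norm (c - z))\<^sup>2
        \<le> b + 1 / (2 * \<gamma>) * ((norm (c - z))\<^sup>2 - 2 * t * ((c - z) \<bullet> (w - z)) + t\<^sup>2 * (norm (w - z))\<^sup>2)"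
      unfolding prox_objective_def a\<^sub>z b n by simp
    moreover have "1 / (2 * \<gamma>) * ((norm (c - z))\<^sup>2 - 2 * t * ((c - z) \<bullet> (w - z)) + t\<^sup>2 * (norm (w - z))\<^sup>2)
        = 1 / (2 * \<gamma>) * (norm (c - z))\<^sup>2 - t * ((1 / \<gamma>) *\<^sub>R (c - z) \<bullet> (w - z))
          + t\<^sup>2 * (1 / (2 * \<gamma>) * (norm (w - z))\<^sup>2)"
      using gamma_pos by (simp add: inner_diff_left field_simps)
    ultimately
    show "a\<^sub>z \<le> b - t * ((1 / \<gamma>) *\<^sub>R (c - z) \<bullet> (w - z)) + t\<^sup>2 * (1 / (2 * \<gamma>) * (norm (w - z))\<^sup>2)"
      by linarith
  qed
  then show ?thesis
    unfolding z_def .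
qed

end

section \<open>The Lyapunov identity\<close>

definition tmm_energy :: "real \<Rightarrow> real \<Rightarrow> 'a::real_inner \<Rightarrow> 'a \<Rightarrow> real" where
  "tmm_energy s L Z U = (s\<^sup>2 * L * (norm Z)\<^sup>2 + s\<^sup>2 * (Z \<bullet> U) + (norm U)\<^sup>2 / (2 * L)) / (1 - s\<^sup>2)"

lemma tmm_energy_lower_bound:
  assumes "0 < L" "s\<^sup>2 < 1"
  shows "s\<^sup>2 * L * (2 - s\<^sup>2) / (2 * (1 - s\<^sup>2)) * (norm Z)\<^sup>2 \<le> tmm_energy s L Z U"
proof -
  have "tmm_energy s L Z U
      = s\<^sup>2 * L * (2 - s\<^sup>2) / (2 * (1 - s\<^sup>2)) * (norm Z)\<^sup>2 + (norm (U + (s\<^sup>2 * L) *\<^sub>R Z))\<^sup>2 / (2 * L * (1 - s\<^sup>2))"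
  proof -
    define r where "r = 1 - s\<^sup>2"
    have "r \<noteq> 0"
      using assms unfolding r_def by simp
    with assms show ?thesis
      unfolding tmm_energy_def power2_norm_eq_inner r_def[symmetric]
      by (simp add: inner_add_left inner_add_right inner_commute field_simps)
  qed
  moreover have "0 \<le> (norm (U + (s\<^sup>2 * L) *\<^sub>R Z))\<^sup>2 / (2 * L * (1 - s\<^sup>2))"
    using assms by simp
  ultimately show ?thesis
    by linarith
qed

text \<open>Normalising this identity directly is infeasible; instead both sides are expanded in the
  Gram basis of six independent vectors and compared coefficientwise.\<close>
locale six_vectors =
  fixes v\<^sub>1 v\<^sub>2 v\<^sub>3 v\<^sub>4 v\<^sub>5 v\<^sub>6 :: "'a::real_inner"
begin

definition comb :: "real \<Rightarrow> real \<Rightarrow> real \<Rightarrow> real \<Rightarrow> real \<Rightarrow> real \<Rightarrow> 'a" where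
  "comb a\<^sub>1 a\<^sub>2 a\<^sub>3 a\<^sub>4 a\<^sub>5 a\<^sub>6 =
     a\<^sub>1 *\<^sub>R v\<^sub>1 + a\<^sub>2 *\<^sub>R v\<^sub>2 + a\<^sub>3 *\<^sub>R v\<^sub>3 + a\<^sub>4 *\<^sub>R v\<^sub>4 + a\<^sub>5 *\<^sub>R v\<^sub>5 + a\<^sub>6 *\<^sub>R v\<^sub>6"

definition gram :: "real \<Rightarrow> real \<Rightarrow> real \<Rightarrow> real \<Rightarrow> real \<Rightarrow> real \<Rightarrow> real \<Rightarrow> real \<Rightarrow> real \<Rightarrow> real \<Rightarrow>
    real \<Rightarrow> real \<Rightarrow> real \<Rightarrow> real \<Rightarrow> real \<Rightarrow> real \<Rightarrow> real \<Rightarrow> real \<Rightarrow> real \<Rightarrow> real \<Rightarrow> real \<Rightarrow> real" where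
  "gram c11 c22 c33 c44 c55 c66 c12 c13 c14 c15 c16 c23 c24 c25 c26 c34 c35 c36 c45 c46 c56 =
     c11 * (v\<^sub>1 \<bullet> v\<^sub>1) + c22 * (v\<^sub>2 \<bullet> v\<^sub>2) + c33 * (v\<^sub>3 \<bullet> v\<^sub>3) + c44 * (v\<^sub>4 \<bullet> v\<^sub>4)
     + c55 * (v\<^sub>5 \<bullet> v\<^sub>5) + c66 * (v\<^sub>6 \<bullet> v\<^sub>6)
     + c12 * (v\<^sub>1 \<bullet> v\<^sub>2) + c13 * (v\<^sub>1 \<bullet> v\<^sub>3) + c14 * (v\<^sub>1 \<bullet> v\<^sub>4) + c15 * (v\<^sub>1 \<bullet> v\<^sub>5) + c16 * (v\<^sub>1 \<bullet> v\<^sub>6)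
     + c23 * (v\<^sub>2 \<bullet> v\<^sub>3) + c24 * (v\<^sub>2 \<bullet> v\<^sub>4) + c25 * (v\<^sub>2 \<bullet> v\<^sub>5) + c26 * (v\<^sub>2 \<bullet> v\<^sub>6)
     + c34 * (v\<^sub>3 \<bullet> v\<^sub>4) + c35 * (v\<^sub>3 \<bullet> v\<^sub>5) + c36 * (v\<^sub>3 \<bullet> v\<^sub>6)
     + c45 * (v\<^sub>4 \<bullet> v\<^sub>5) + c46 * (v\<^sub>4 \<bullet> v\<^sub>6) + c56 * (v\<^sub>5 \<bullet> v\<^sub>6)"

lemma comb_add:
  "comb a1 a2 a3 a4 a5 a6 + comb b1 b2 b3 b4 b5 b6 = comb (a1+b1) (a2+b2) (a3+b3) (a4+b4) (a5+b5) (a6+b6)"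
  by (simp add: comb_def algebra_simps)

lemma comb_diff:
  "comb a1 a2 a3 a4 a5 a6 - comb b1 b2 b3 b4 b5 b6 = comb (a1-b1) (a2-b2) (a3-b3) (a4-b4) (a5-b5) (a6-b6)"
  by (simp add: comb_def algebra_simps)

lemma scaleR_comb: "r *\<^sub>R comb a1 a2 a3 a4 a5 a6 = comb (r*a1) (r*a2) (r*a3) (r*a4) (r*a5) (r*a6)"
  by (simp add: comb_def algebra_simps)

lemma inner_comb:
  "comb a1 a2 a3 a4 a5 a6 \<bullet> comb b1 b2 b3 b4 b5 b6 =
     gram (a1*b1) (a2*b2) (a3*b3) (a4*b4) (a5*b5) (a6*b6)
       (a1*b2+a2*b1) (a1*b3+a3*b1) (a1*b4+a4*b1) (a1*b5+a5*b1) (a1*b6+a6*b1)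
       (a2*b3+a3*b2) (a2*b4+a4*b2) (a2*b5+a5*b2) (a2*b6+a6*b2)
       (a3*b4+a4*b3) (a3*b5+a5*b3) (a3*b6+a6*b3) (a4*b5+a5*b4) (a4*b6+a6*b4) (a5*b6+a6*b5)"
  by (simp add: gram_def comb_def inner_add_left inner_add_right inner_commute algebra_simps)

lemma gram_add:
  "gram c1 c2 c3 c4 c5 c6 c7 c8 c9 c10 c11 c12 c13 c14 c15 c16 c17 c18 c19 c20 c21
   + gram d1 d2 d3 d4 d5 d6 d7 d8 d9 d10 d11 d12 d13 d14 d15 d16 d17 d18 d19 d20 d21
   = gram (c1+d1) (c2+d2) (c3+d3) (c4+d4) (c5+d5) (c6+d6) (c7+d7) (c8+d8) (c9+d9) (c10+d10)
       (c11+d11) (c12+d12) (c13+d13) (c14+d14) (c15+d15) (c16+d16) (c17+d17) (c18+d18) (c19+d19)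
       (c20+d20) (c21+d21)"
  by (simp add: gram_def algebra_simps)

lemma gram_diff:
  "gram c1 c2 c3 c4 c5 c6 c7 c8 c9 c10 c11 c12 c13 c14 c15 c16 c17 c18 c19 c20 c21
   - gram d1 d2 d3 d4 d5 d6 d7 d8 d9 d10 d11 d12 d13 d14 d15 d16 d17 d18 d19 d20 d21
   = gram (c1-d1) (c2-d2) (c3-d3) (c4-d4) (c5-d5) (c6-d6) (c7-d7) (c8-d8) (c9-d9) (c10-d10)
       (c11-d11) (c12-d12) (c13-d13) (c14-d14) (c15-d15) (c16-d16) (c17-d17) (c18-d18) (c19-d19)
       (c20-d20) (c21-d21)"
  by (simp add: gram_def algebra_simps)

lemma mult_gram:
  "r * gram c1 c2 c3 c4 c5 c6 c7 c8 c9 c10 c11 c12 c13 c14 c15 c16 c17 c18 c19 c20 c21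
   = gram (r*c1) (r*c2) (r*c3) (r*c4) (r*c5) (r*c6) (r*c7) (r*c8) (r*c9) (r*c10) (r*c11) (r*c12)
       (r*c13) (r*c14) (r*c15) (r*c16) (r*c17) (r*c18) (r*c19) (r*c20) (r*c21)"
  by (simp add: gram_def algebra_simps)

lemma gram_divide:
  "gram c1 c2 c3 c4 c5 c6 c7 c8 c9 c10 c11 c12 c13 c14 c15 c16 c17 c18 c19 c20 c21 / r
   = gram (c1/r) (c2/r) (c3/r) (c4/r) (c5/r) (c6/r) (c7/r) (c8/r) (c9/r) (c10/r) (c11/r) (c12/r)
       (c13/r) (c14/r) (c15/r) (c16/r) (c17/r) (c18/r) (c19/r) (c20/r) (c21/r)"
  by (simp add: gram_def add_divide_distrib)

lemma uminus_gram:
  "- gram c1 c2 c3 c4 c5 c6 c7 c8 c9 c10 c11 c12 c13 c14 c15 c16 c17 c18 c19 c20 c21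
   = gram (-c1) (-c2) (-c3) (-c4) (-c5) (-c6) (-c7) (-c8) (-c9) (-c10) (-c11) (-c12)
       (-c13) (-c14) (-c15) (-c16) (-c17) (-c18) (-c19) (-c20) (-c21)"
  by (simp add: gram_def algebra_simps)

lemma gram_cong:
  "c1 = d1 \<Longrightarrow> c2 = d2 \<Longrightarrow> c3 = d3 \<Longrightarrow> c4 = d4 \<Longrightarrow> c5 = d5 \<Longrightarrow> c6 = d6 \<Longrightarrow> c7 = d7 \<Longrightarrow>
   c8 = d8 \<Longrightarrow> c9 = d9 \<Longrightarrow> c10 = d10 \<Longrightarrow> c11 = d11 \<Longrightarrow> c12 = d12 \<Longrightarrow> c13 = d13 \<Longrightarrow>
   c14 = d14 \<Longrightarrow> c15 = d15 \<Longrightarrow> c16 = d16 \<Longrightarrow> c17 = d17 \<Longrightarrow> c18 = d18 \<Longrightarrow> c19 = d19 \<Longrightarrow>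
   c20 = d20 \<Longrightarrow> c21 = d21 \<Longrightarrow>
   gram c1 c2 c3 c4 c5 c6 c7 c8 c9 c10 c11 c12 c13 c14 c15 c16 c17 c18 c19 c20 c21
   = gram d1 d2 d3 d4 d5 d6 d7 d8 d9 d10 d11 d12 d13 d14 d15 d16 d17 d18 d19 d20 d21"
  by simp

lemmas gram_normalise =
  comb_add comb_diff scaleR_comb inner_comb power2_norm_eq_inner
  gram_add gram_diff mult_gram gram_divide uminus_gram

lemma tmm_lyapunov_identity_coords:
  fixes s L :: real
  assumes "s \<noteq> 0" "s \<noteq> 1" "s \<noteq> -1" "L \<noteq> 0"
  shows "let Z = comb 1 0 0 0 0 0; Y = comb 0 1 0 0 0 0; D = comb 0 0 1 0 0 0; U = comb 0 0 0 1 0 0;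
      D' = comb 0 0 0 0 1 0; U' = comb 0 0 0 0 0 1; \<mu> = s\<^sup>2 * L;
      X' = Y - (1 / L) *\<^sub>R (D + U);
      Y' = (2 * s / (1 + s)) *\<^sub>R Z + ((1 - s) / (1 + s)) *\<^sub>R X';
      Z' = (1 - s) *\<^sub>R Z + s *\<^sub>R Y' - (1 / (s * L)) *\<^sub>R (D' + U') in
    tmm_energy s L Z' U' - interp_gap \<mu> L Y' D' - (1 - s)\<^sup>2 * (tmm_energy s L Z U - interp_gap \<mu> L Y D)
    + (1 - (1 - s)\<^sup>2) * (D' \<bullet> Y' - interp_gap \<mu> L Y' D')
    + (1 - s)\<^sup>2 * (- (D' \<bullet> (Y - Y')) - interp_gap \<mu> L (Y - Y') (D - D'))
    + s * (2 - s) / (1 - s\<^sup>2) * (U' \<bullet> Z') - s * (1 - s) / (1 + s) * (U \<bullet> (Z' - Z))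
  = - ((1 - s) / (2 * L * (1 + s))) * (norm (U - U'))\<^sup>2 - s * (2 - s) / (2 * L * (1 - s\<^sup>2)) * (norm U')\<^sup>2"
proof -
  \<comment> \<open>Abbreviating \<open>1 - s\<close> and \<open>1 + s\<close> keeps all denominators atomic for \<open>field_simps\<close>.\<close>
  define M P where "M = 1 - s" and "P = 1 + s"
  have nz: "M \<noteq> 0" "P \<noteq> 0"
    using assms unfolding M_def P_def by auto
  have e: "1 - s\<^sup>2 = M * P" "L - s\<^sup>2 * L = L * M * P" "1 + s = P" "1 - s = M"
    by (simp_all add: M_def P_def algebra_simps power2_eq_square)
  show ?thesis
    unfolding Let_def tmm_energy_def interp_gap_def
    apply (simp only: e gram_normalise)
    apply (rule gram_cong)
    apply (simp_all add: assms nz field_simps)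
    apply (simp_all add: M_def P_def)
    apply algebra+
    done
qed

end

lemma tmm_lyapunov_identity:
  fixes Z Y D U D' U' X' Y' Z' :: "'a::real_inner"
  assumes "s \<noteq> 0" "s \<noteq> 1" "s \<noteq> -1" "L \<noteq> 0"
    and X': "X' = Y - (1 / L) *\<^sub>R (D + U)"
    and Y': "Y' = (2 * s / (1 + s)) *\<^sub>R Z + ((1 - s) / (1 + s)) *\<^sub>R X'"
    and Z': "Z' = (1 - s) *\<^sub>R Z + s *\<^sub>R Y' - (1 / (s * L)) *\<^sub>R (D' + U')"
  defines "\<mu> \<equiv> s\<^sup>2 * L"
  shows "tmm_energy s L Z' U' - interp_gap \<mu> L Y' D' - (1 - s)\<^sup>2 * (tmm_energy s L Z U - interp_gap \<mu> L Y D)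
    + (1 - (1 - s)\<^sup>2) * (D' \<bullet> Y' - interp_gap \<mu> L Y' D')
    + (1 - s)\<^sup>2 * (- (D' \<bullet> (Y - Y')) - interp_gap \<mu> L (Y - Y') (D - D'))
    + s * (2 - s) / (1 - s\<^sup>2) * (U' \<bullet> Z') - s * (1 - s) / (1 + s) * (U \<bullet> (Z' - Z))
  = - ((1 - s) / (2 * L * (1 + s))) * (norm (U - U'))\<^sup>2 - s * (2 - s) / (2 * L * (1 - s\<^sup>2)) * (norm U')\<^sup>2"
proof -
  have basis: "six_vectors.comb Z Y D U D' U' 1 0 0 0 0 0 = Z" "six_vectors.comb Z Y D U D' U' 0 1 0 0 0 0 = Y"
    "six_vectors.comb Z Y D U D' U' 0 0 1 0 0 0 = D" "six_vectors.comb Z Y D U D' U' 0 0 0 1 0 0 = U"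
    "six_vectors.comb Z Y D U D' U' 0 0 0 0 1 0 = D'" "six_vectors.comb Z Y D U D' U' 0 0 0 0 0 1 = U'"
    by (simp_all add: six_vectors.comb_def)
  from six_vectors.tmm_lyapunov_identity_coords[OF assms(1-4), of Z Y D U D' U']
  show ?thesis
    unfolding Let_def basis Z' Y' X' \<mu>_def .
qed

lemma tmm_lyapunov_inequality:
  fixes Z Y D U D' U' X' Y' Z' :: "'a::real_inner"
  assumes s: "0 < s" "s < 1" and L: "0 < L"
    and X': "X' = Y - (1 / L) *\<^sub>R (D + U)"
    and Y': "Y' = (2 * s / (1 + s)) *\<^sub>R Z + ((1 - s) / (1 + s)) *\<^sub>R X'"
    and Z': "Z' = (1 - s) *\<^sub>R Z + s *\<^sub>R Y' - (1 / (s * L)) *\<^sub>R (D' + U')"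
  defines "\<mu> \<equiv> s\<^sup>2 * L"
  shows "tmm_energy s L Z' U' - interp_gap \<mu> L Y' D' - (1 - s)\<^sup>2 * (tmm_energy s L Z U - interp_gap \<mu> L Y D)
    + (1 - (1 - s)\<^sup>2) * (D' \<bullet> Y' - interp_gap \<mu> L Y' D')
    + (1 - s)\<^sup>2 * (- (D' \<bullet> (Y - Y')) - interp_gap \<mu> L (Y - Y') (D - D'))
    + s * (2 - s) / (1 - s\<^sup>2) * (U' \<bullet> Z') - s * (1 - s) / (1 + s) * (U \<bullet> (Z' - Z)) \<le> 0"
proof -
  have "s \<noteq> 0" "s \<noteq> 1" "s \<noteq> -1" "L \<noteq> 0"
    using s L by auto
  note identity = tmm_lyapunov_identity[OF this X' Y' Z']
  have "s\<^sup>2 < 1"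
    using s by (simp add: power_less_one_iff)
  with s L have c\<^sub>1: "0 \<le> (1 - s) / (2 * L * (1 + s))" and c\<^sub>2: "0 \<le> s * (2 - s) / (2 * L * (1 - s\<^sup>2))"
    by simp_all
  from identity mult_nonneg_nonneg[OF c\<^sub>1 zero_le_power2[of "norm (U - U')"]]
    mult_nonneg_nonneg[OF c\<^sub>2 zero_le_power2[of "norm U'"]]
  show ?thesis
    unfolding \<mu>_def by simp
qed

lemma tmm_coupling_weights:
  fixes s :: real
  assumes "0 < s" "s < 1"
  shows "0 \<le> s * (1 - s) / (1 + s)" and "s * (1 - s) / (1 + s) \<le> s * (2 - s) / (1 - s\<^sup>2)"
proof -
  show "0 \<le> s * (1 - s) / (1 + s)"
    using assms by simp
  have "s * (1 - s) / (1 + s) = s * (1 - s)\<^sup>2 / (1 - s\<^sup>2)"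
  proof -
    have "1 - s\<^sup>2 = (1 - s) * (1 + s)"
      by (simp add: power2_eq_square algebra_simps)
    with assms show ?thesis
      by (simp add: power2_eq_square)
  qed
  moreover have "(1 - s)\<^sup>2 \<le> 2 - s"
  proof -
    have "(1 - s) * (1 - s) \<le> 1 - s"
      using mult_left_mono[of "1 - s" 1 "1 - s"] assms by simp
    then show ?thesis
      unfolding power2_eq_square by linarith
  qed
  moreover have "s\<^sup>2 < 1"
    using assms by (simp add: power_less_one_iff)
  ultimately show "s * (1 - s) / (1 + s) \<le> s * (2 - s) / (1 - s\<^sup>2)"
    using assms by (auto intro!: divide_right_mono mult_left_mono)
qed

section \<open>Linear convergence of Prox-TMM\<close>

locale prox_tmm = strongly_convex_lipschitz_gradient f gradf L \<mu>
  for f :: "'a::{real_inner, complete_space} \<Rightarrow> real" and gradf L \<mu> +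
  fixes g :: "'a \<Rightarrow> ereal" and x y z zbar :: "nat \<Rightarrow> 'a" and xstar :: 'a and s :: real
  assumes mu_pos: "0 < \<mu>"
    and s_def: "s = sqrt (\<mu> / L)"
    and g_convex: "ext_convex g" and g_proper: "ext_proper g" and g_lsc: "ext_lsc g"
    and y_def: "\<And>k. y k = (2 * s / (1 + s)) *\<^sub>R z k + ((1 - s) / (1 + s)) *\<^sub>R x k"
    and zbar_def: "\<And>k. zbar (Suc k) = (1 - s) *\<^sub>R z k + s *\<^sub>R y k - (1 / (s * L)) *\<^sub>R gradf (y k)"
    and z_def: "\<And>k. z (Suc k) = prox (1 / (s * L)) g (zbar (Suc k))"
    and x_def: "\<And>k. x (Suc k) = y k - (1 / L) *\<^sub>R gradf (y k) - s *\<^sub>R (zbar (Suc k) - z (Suc k))"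
    and minimizer: "\<And>w. ereal (f xstar) + g xstar \<le> ereal (f w) + g w"
begin

lemma L_pos: "0 < L"
  using mu_pos mu_less_L by linarith

lemma s_pos: "0 < s" and s_less_1: "s < 1" and mu_eq: "\<mu> = s\<^sup>2 * L"
  using mu_pos mu_less_L L_pos unfolding s_def by (simp_all add: real_sqrt_less_iff)

lemma s_sq_less_1: "s\<^sup>2 < 1"
  using s_pos s_less_1 by (simp add: power_less_one_iff)

lemma g_not_minf: "g w \<noteq> -\<infinity>"
  using g_proper unfolding ext_proper_def by blast

lemma g_real: "g w \<noteq> \<infinity> \<Longrightarrow> g w = ereal (real_of_ereal (g w))"
  using g_not_minf[of w] by (cases "g w") auto

lemma g_xstar_finite: "g xstar \<noteq> \<infinity>"
proof
  assume "g xstar = \<infinity>"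
  moreover obtain w where "g w \<noteq> \<infinity>"
    using g_proper unfolding ext_proper_def by blast
  ultimately show False
    using minimizer[of w] g_not_minf[of w] by (cases "g w") auto
qed

lemma xstar_subgradient: "ext_subgradient g xstar (- gradf xstar)"
  using minimizer_subgradient[OF g_convex g_not_minf minimizer g_real[OF g_xstar_finite]] .

definition u :: "nat \<Rightarrow> 'a" where
  "u k = (s * L) *\<^sub>R (zbar k - z k)"

lemma z_finite: "g (z (Suc k)) \<noteq> \<infinity>"
  unfolding z_def
  using prox_finite[OF g_convex g_lsc g_not_minf g_real[OF g_xstar_finite] xstar_subgradient] s_pos L_pos
  by simp

lemma z_subgradient: "ext_subgradient g (z (Suc k)) (u (Suc k))"
  using prox_subgradient[OF g_convex g_lsc g_not_minf g_real[OF g_xstar_finite] xstar_subgradient,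
      of "1 / (s * L)" "zbar (Suc k)"] s_pos L_pos
  unfolding u_def z_def[symmetric] by simp

lemma z_Suc: "z (Suc k) = (1 - s) *\<^sub>R z k + s *\<^sub>R y k - (1 / (s * L)) *\<^sub>R (gradf (y k) + u (Suc k))"
  using zbar_def[of k] s_pos L_pos unfolding u_def by (simp add: algebra_simps)

lemma x_Suc: "x (Suc k) = y k - (1 / L) *\<^sub>R (gradf (y k) + u (Suc k))"
  using x_def[of k] s_pos L_pos unfolding u_def by (simp add: algebra_simps)

lemma error_recursion:
  "x (Suc k) - xstar = (y k - xstar) - (1 / L) *\<^sub>R ((gradf (y k) - gradf xstar) + (u (Suc k) + gradf xstar))"
  "y k - xstar = (2 * s / (1 + s)) *\<^sub>R (z k - xstar) + ((1 - s) / (1 + s)) *\<^sub>R (x k - xstar)"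
  "z (Suc k) - xstar = (1 - s) *\<^sub>R (z k - xstar) + s *\<^sub>R (y k - xstar)
     - (1 / (s * L)) *\<^sub>R ((gradf (y k) - gradf xstar) + (u (Suc k) + gradf xstar))"
proof -
  show "x (Suc k) - xstar = (y k - xstar) - (1 / L) *\<^sub>R ((gradf (y k) - gradf xstar) + (u (Suc k) + gradf xstar))"
    unfolding x_Suc by (simp add: algebra_simps)
  have "2 * s / (1 + s) + (1 - s) / (1 + s) = 1"
    using s_pos by (simp add: add_divide_distrib[symmetric] algebra_simps)
  then have "(2 * s / (1 + s)) *\<^sub>R xstar + ((1 - s) / (1 + s)) *\<^sub>R xstar = xstar"
    by (metis scaleR_left_distrib scaleR_one)
  then show "y k - xstar = (2 * s / (1 + s)) *\<^sub>R (z k - xstar) + ((1 - s) / (1 + s)) *\<^sub>R (x k - xstar)"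
    unfolding y_def[of k] by (simp add: algebra_simps)
  show "z (Suc k) - xstar = (1 - s) *\<^sub>R (z k - xstar) + s *\<^sub>R (y k - xstar)
     - (1 / (s * L)) *\<^sub>R ((gradf (y k) - gradf xstar) + (u (Suc k) + gradf xstar))"
    unfolding z_Suc by (simp add: algebra_simps)
qed

definition lyap :: "nat \<Rightarrow> real" where
  "lyap j = tmm_energy s L (z (Suc j) - xstar) (u (Suc j) + gradf xstar)
     + bregman (y j) xstar - interp_gap \<mu> L (y j - xstar) (gradf (y j) - gradf xstar)"

lemma lyap_lower_bound: "s\<^sup>2 * L * (2 - s\<^sup>2) / (2 * (1 - s\<^sup>2)) * (norm (z (Suc j) - xstar))\<^sup>2 \<le> lyap j"
proof -
  from tmm_energy_lower_bound[OF L_pos s_sq_less_1, of "z (Suc j) - xstar" "u (Suc j) + gradf xstar"]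
    interpolation_inequality[of "y j" xstar]
  show ?thesis
    unfolding lyap_def by linarith
qed

lemma subgradient_coupling:
  assumes "0 \<le> \<beta>" "\<beta> \<le> \<alpha>"
  shows "\<beta> * ((u (Suc j) + gradf xstar) \<bullet> (z (Suc (Suc j)) - z (Suc j)))
    \<le> \<alpha> * ((u (Suc (Suc j)) + gradf xstar) \<bullet> (z (Suc (Suc j)) - xstar))"
proof -
  define G where "G w = real_of_ereal (g w)" for w
  note G_real = g_real[folded G_def]
  define h where "h w = G w - G xstar + gradf xstar \<bullet> (w - xstar)" for w
  have h_nonneg: "0 \<le> h (z (Suc k))" for k
    using ext_subgradient_real[OF xstar_subgradient G_real[OF g_xstar_finite] G_real[OF z_finite[of k]]]
    unfolding h_def by (simp add: inner_minus_left)
  have "G (z (Suc (Suc j))) + u (Suc (Suc j)) \<bullet> (xstar - z (Suc (Suc j))) \<le> G xstar"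
    using ext_subgradient_real[OF z_subgradient G_real[OF z_finite] G_real[OF g_xstar_finite]] .
  then have upper: "h (z (Suc (Suc j))) \<le> (u (Suc (Suc j)) + gradf xstar) \<bullet> (z (Suc (Suc j)) - xstar)"
    unfolding h_def by (simp add: inner_add_left inner_diff_right algebra_simps)
  have "G (z (Suc j)) + u (Suc j) \<bullet> (z (Suc (Suc j)) - z (Suc j)) \<le> G (z (Suc (Suc j)))"
    using ext_subgradient_real[OF z_subgradient G_real[OF z_finite] G_real[OF z_finite]] .
  then have step: "(u (Suc j) + gradf xstar) \<bullet> (z (Suc (Suc j)) - z (Suc j)) \<le> h (z (Suc (Suc j))) - h (z (Suc j))"
    unfolding h_def by (simp add: inner_add_left inner_diff_right algebra_simps)
  have "\<beta> * ((u (Suc j) + gradf xstar) \<bullet> (z (Suc (Suc j)) - z (Suc j)))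
      \<le> \<beta> * (h (z (Suc (Suc j))) - h (z (Suc j)))"
    using step assms(1) by (rule mult_left_mono)
  also have "\<dots> \<le> \<beta> * h (z (Suc (Suc j)))"
    using h_nonneg[of j] assms(1) by (simp add: mult_left_mono)
  also have "\<dots> \<le> \<alpha> * h (z (Suc (Suc j)))"
    using assms(2) h_nonneg[of "Suc j"] by (rule mult_right_mono)
  also have "\<dots> \<le> \<alpha> * ((u (Suc (Suc j)) + gradf xstar) \<bullet> (z (Suc (Suc j)) - xstar))"
    using upper assms by (simp add: mult_left_mono)
  finally show ?thesis .
qed

lemma lyap_contraction: "lyap (Suc j) \<le> (1 - s)\<^sup>2 * lyap j"
proof -
  define Z Y D U where "Z = z (Suc j) - xstar" and "Y = y j - xstar"
    and "D = gradf (y j) - gradf xstar" and "U = u (Suc j) + gradf xstar"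
  define Z' Y' D' U' where "Z' = z (Suc (Suc j)) - xstar" and "Y' = y (Suc j) - xstar"
    and "D' = gradf (y (Suc j)) - gradf xstar" and "U' = u (Suc (Suc j)) + gradf xstar"
  define \<alpha> \<beta> where "\<alpha> = s * (2 - s) / (1 - s\<^sup>2)" and "\<beta> = s * (1 - s) / (1 + s)"
  have "tmm_energy s L Z' U' - interp_gap \<mu> L Y' D' - (1 - s)\<^sup>2 * (tmm_energy s L Z U - interp_gap \<mu> L Y D)
      + (1 - (1 - s)\<^sup>2) * (D' \<bullet> Y' - interp_gap \<mu> L Y' D')
      + (1 - s)\<^sup>2 * (- (D' \<bullet> (Y - Y')) - interp_gap \<mu> L (Y - Y') (D - D'))
      + \<alpha> * (U' \<bullet> Z') - \<beta> * (U \<bullet> (Z' - Z)) \<le> 0"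
    using tmm_lyapunov_inequality[OF s_pos s_less_1 L_pos error_recursion(1)[of j]
        error_recursion(2)[of "Suc j"] error_recursion(3)[of "Suc j"]]
    unfolding \<alpha>_def \<beta>_def mu_eq Z_def Y_def D_def U_def Z'_def Y'_def D'_def U'_def .
  moreover have "(1 - (1 - s)\<^sup>2) * bregman (y (Suc j)) xstar \<le> (1 - (1 - s)\<^sup>2) * (D' \<bullet> Y' - interp_gap \<mu> L Y' D')"
    using bregman_le[of "y (Suc j)" xstar] s_pos s_less_1
    unfolding D'_def Y'_def by (intro mult_left_mono) (auto simp: power_le_one)
  moreover have "(1 - s)\<^sup>2 * (bregman (y (Suc j)) xstar - bregman (y j) xstar)
      \<le> (1 - s)\<^sup>2 * (- (D' \<bullet> (Y - Y')) - interp_gap \<mu> L (Y - Y') (D - D'))"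
    using bregman_three_point[of "y j" xstar "y (Suc j)"] interpolation_inequality[of "y j" "y (Suc j)"]
    unfolding D_def D'_def Y_def Y'_def by (intro mult_left_mono) auto
  moreover have "\<beta> * (U \<bullet> (Z' - Z)) \<le> \<alpha> * (U' \<bullet> Z')"
    using subgradient_coupling[OF tmm_coupling_weights[OF s_pos s_less_1], of j]
    unfolding \<alpha>_def \<beta>_def U_def U'_def Z_def Z'_def by simp
  ultimately show ?thesis
    unfolding lyap_def Z_def[symmetric] Y_def[symmetric] D_def[symmetric] U_def[symmetric]
      Z'_def[symmetric] Y'_def[symmetric] D'_def[symmetric] U'_def[symmetric]
    by (simp only: ring_distribs)
qed

lemma z_dist_bound: "norm (z (Suc j) - xstar) \<le> sqrt (lyap 0 / \<kappa>) * (1 - s) ^ j"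
  if "\<kappa> = s\<^sup>2 * L * (2 - s\<^sup>2) / (2 * (1 - s\<^sup>2))"
proof -
  have \<kappa>: "0 < \<kappa>"
    using that s_pos s_sq_less_1 L_pos by simp
  have lyap_le: "lyap j \<le> ((1 - s)\<^sup>2) ^ j * lyap 0"
  proof (induction j)
    case (Suc j)
    have "lyap (Suc j) \<le> (1 - s)\<^sup>2 * lyap j"
      by (rule lyap_contraction)
    also have "\<dots> \<le> (1 - s)\<^sup>2 * (((1 - s)\<^sup>2) ^ j * lyap 0)"
      using Suc.IH by (simp add: mult_left_mono)
    finally show ?case
      by simp
  qed simp
  have "\<kappa> * (norm (z (Suc j) - xstar))\<^sup>2 \<le> ((1 - s) ^ j)\<^sup>2 * lyap 0"
    using lyap_lower_bound[of j] lyap_le unfolding that by (simp add: power_mult[symmetric] mult.commute)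
  then have "(norm (z (Suc j) - xstar))\<^sup>2 \<le> ((1 - s) ^ j)\<^sup>2 * (lyap 0 / \<kappa>)"
    using \<kappa> by (simp add: field_simps)
  then have "norm (z (Suc j) - xstar) \<le> sqrt (((1 - s) ^ j)\<^sup>2 * (lyap 0 / \<kappa>))"
    using real_le_rsqrt by blast
  also have "\<dots> = sqrt (lyap 0 / \<kappa>) * (1 - s) ^ j"
    unfolding real_sqrt_mult using s_less_1 by simp
  finally show ?thesis .
qed

theorem z_converges_linearly: "(\<lambda>k. norm (z k - xstar)) \<in> O(\<lambda>k. (1 - s) ^ k)"
proof (rule bigoI)
  define \<kappa> where "\<kappa> = s\<^sup>2 * L * (2 - s\<^sup>2) / (2 * (1 - s\<^sup>2))"
  define C where "C = sqrt (lyap 0 / \<kappa>) / (1 - s)"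
  have "norm (norm (z (Suc j) - xstar)) \<le> C * norm ((1 - s) ^ Suc j)" for j
  proof -
    have "C * norm ((1 - s) ^ Suc j) = sqrt (lyap 0 / \<kappa>) * (1 - s) ^ j"
      unfolding C_def using s_less_1 by simp
    with z_dist_bound[OF \<kappa>_def, of j] show ?thesis
      by simp
  qed
  then show "\<forall>\<^sub>F k in sequentially. norm (norm (z k - xstar)) \<le> C * norm ((1 - s) ^ k)"
    unfolding eventually_sequentially by (metis Suc_le_D)
qed

end

theorem theorem3:
  fixes f :: "'a::{real_inner, complete_space} \<Rightarrow> real"
    and gradf :: "'a \<Rightarrow> 'a"
    and g :: "'a \<Rightarrow> ereal"
    and \<mu> L :: real
    and x y z zbar :: "nat \<Rightarrow> 'a"
    and x0 xstar :: 'a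
  assumes mu_pos: "0 < \<mu>" and mu_L: "\<mu> < L"
    and f_deriv: "\<And>u. (f has_derivative (\<lambda>h. gradf u \<bullet> h)) (at u)"
    and f_lip: "\<And>u v. norm (gradf u - gradf v) \<le> L * norm (u - v)"
    and f_strong: "convex_on UNIV (\<lambda>u. f u - \<mu> / 2 * (norm u)\<^sup>2)"
    and g_convex: "ext_convex g" and g_proper: "ext_proper g" and g_lsc: "ext_lsc g"
    and x_init: "x 0 = x0" and z_init: "z 0 = x0"
    and y_def: "\<And>k. y k = (2 * sqrt (\<mu> / L) / (1 + sqrt (\<mu> / L))) *\<^sub>R z k
                        + ((1 - sqrt (\<mu> / L)) / (1 + sqrt (\<mu> / L))) *\<^sub>R x k"
    and zbar_def: "\<And>k. zbar (Suc k) = (1 - sqrt (\<mu> / L)) *\<^sub>R z k + sqrt (\<mu> / L) *\<^sub>R y k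
                        - (1 / (sqrt (\<mu> / L) * L)) *\<^sub>R gradf (y k)"
    and z_def: "\<And>k. z (Suc k) = prox (1 / (sqrt (\<mu> / L) * L)) g (zbar (Suc k))"
    and x_def: "\<And>k. x (Suc k) = y k - (1 / L) *\<^sub>R gradf (y k)
                        - sqrt (\<mu> / L) *\<^sub>R (zbar (Suc k) - z (Suc k))"
    and xstar_min: "\<And>w. ereal (f xstar) + g xstar \<le> ereal (f w) + g w"
  shows "(\<lambda>k. norm (z k - xstar)) \<in> O(\<lambda>k. (1 - sqrt (\<mu> / L)) ^ k)"
proof -
  interpret prox_tmm f gradf L \<mu> g x y z zbar xstar "sqrt (\<mu> / L)"
    by unfold_locales (fact assms | rule refl)+
  show ?thesis
    by (rule z_converges_linearly)
qed

end
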